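(* Let $\boldsymbol\lambda$ be a partition with at most $N$ parts, $d_i=\lambda_i+N-i$, and let $F_{ij}\in\mathcal O_{\boldsymbol\lambda}$ be as defined in the context. Set $F_{00}=1$ and $\chi(\alpha)=\sum_{i=0}^NF_{ii}\prod_{j=0}^{N-i-1}(\alpha-j)$. Then $\chi(\alpha)=\prod_{i=1}^N(\alpha-d_i)$.
   Context: A partition with at most $N$ parts is a sequence of integers $\lambda_1\ge\dots\ge\lambda_N\ge0$; $|\boldsymbol\lambda|=\sum\lambda_i$. Put $d_i=\lambda_i+N-i$ and $P=\{d_1,\dots,d_N\}$. Let $\mathcal O_{\boldsymbol\lambda}=\mathbb C[f_{ij}:1\le i\le N,\ 1\le j\le d_i,\ d_i-j\notin P]$ be the polynomial algebra in the indicated variables (the coordinate ring of the Schubert cell of $N$-dimensional spaces of polynomials whose set of degrees is $P$), and let $f_i(u)=u^{d_i}+\sum_{1\le j\le d_i,\ d_i-j\notin P}f_{ij}u^{d_i-j}$. Let $\operatorname{Wr}(g_1,\dots,g_N)=\det(g_i^{(j-1)})_{i,j=1}^N$ be the Wronskian. For a square matrix $A=(a_{ij})$ with possibly noncommuting entries, $\operatorname{rdet}A=\sum_{\sigma}\operatorname{sgn}(\sigma)a_{1\sigma(1)}a_{2\sigma(2)}\cdots$. Let $\partial=d/du$ and define the differential operator $\mathcal D^{\mathcal O}_{\boldsymbol\lambda}=\frac1{\operatorname{Wr}(f_1,\dots,f_N)}\operatorname{rdet}\begin{pmatrix}f_1&f_1'&\dots&f_1^{(N)}\\ \vdots&&&\vdots\\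 f_N&f_N'&\dots&f_N^{(N)}\\ 1&\partial&\dots&\partial^N\end{pmatrix}=\partial^N+\sum_{i=1}^NF_i(u)\partial^{N-i}$. The top coefficient of $\operatorname{Wr}(f_1,\dots,f_N)$ (a polynomial in $u$ over $\mathcal O_{\boldsymbol\lambda}$) is a nonzero constant, so each $F_i(u)$ expands as $F_i(u)=\sum_{j\ge1}F_{ij}u^{-j}$ with $F_{ij}\in\mathcal O_{\boldsymbol\lambda}$. *)

theory Defs
  imports "HOL-Computational_Algebra.Polynomial"
          "HOL-Computational_Algebra.Formal_Laurent_Series"
          "Jordan_Normal_Form.Determinant"
begin

text \<open>Partitions with at most N parts, indexed 1..N (values outside are irrelevant).\<close>
definition is_partition :: "nat \<Rightarrow> (nat \<Rightarrow> nat) \<Rightarrow> bool" where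
  "is_partition N lam \<longleftrightarrow> (\<forall>i. 1 \<le> i \<and> i < N \<longrightarrow> lam (Suc i) \<le> lam i)"

definition dseq :: "nat \<Rightarrow> (nat \<Rightarrow> nat) \<Rightarrow> nat \<Rightarrow> nat" where
  "dseq N lam i = lam i + N - i"

definition degset :: "nat \<Rightarrow> (nat \<Rightarrow> nat) \<Rightarrow> nat set" where
  "degset N lam = dseq N lam ` {1..N}"

text \<open>The polynomial f_i(u) with the coordinate f_ij specialised to the complex number c i j.\<close>
definition fpoly :: "nat \<Rightarrow> (nat \<Rightarrow> nat) \<Rightarrow> (nat \<Rightarrow> nat \<Rightarrow> complex) \<Rightarrow> nat \<Rightarrow> complex poly" where
  "fpoly N lam c i =
     monom 1 (dseq N lam i)
     + (\<Sum>j\<in>{j. 1 \<le> j \<and> j \<le> dseq N lam i \<and> dseq N lam i - j \<notin> degset N lam}.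
          monom (c i j) (dseq N lam i - j))"

text \<open>Wronskian Wr(f_1,...,f_N) = det (f_i^{(j-1)}) (0-based indices in the matrix).\<close>
definition wronsk :: "nat \<Rightarrow> (nat \<Rightarrow> complex poly) \<Rightarrow> complex poly" where
  "wronsk N f = det (mat N N (\<lambda>(r, s). (pderiv ^^ s) (f (Suc r))))"

text \<open>Minor of the (N+1)x(N+1) matrix (f_i^{(j)}) obtained by deleting the last row
  (the operator row) and the column of index k (0 \<le> k \<le> N).\<close>
definition wminor :: "nat \<Rightarrow> (nat \<Rightarrow> complex poly) \<Rightarrow> nat \<Rightarrow> complex poly" where
  "wminor N f k = det (mat N N (\<lambda>(r, s). (pderiv ^^ (if s < k then s else Suc s)) (f (Suc r))))"

text \<open>Expansion at u = infinity: a polynomial in u as a Laurent series in t = u^{-1}.\<close>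
definition poly_at_inf :: "complex poly \<Rightarrow> complex fls" where
  "poly_at_inf p = (\<Sum>k\<le>degree p. fls_const (coeff p k) * fls_X_inv ^ k)"

text \<open>Expanding rdet along the last row (the only row with non-commuting entries,
  which stand rightmost in every product) gives
  D = sum_k (-1)^(N+k) (wminor k / Wr) \<partial>^k, hence F_i(u) = (-1)^i wminor (N-i) / Wr.
  F_ij is the coefficient of u^{-j} = t^j of its expansion at infinity.\<close>
definition Fcoef :: "nat \<Rightarrow> (nat \<Rightarrow> nat) \<Rightarrow> (nat \<Rightarrow> nat \<Rightarrow> complex) \<Rightarrow> nat \<Rightarrow> nat \<Rightarrow> complex" where
  "Fcoef N lam c i j =
     fls_nth ((-1) ^ i * poly_at_inf (wminor N (fpoly N lam c) (N - i))
              / poly_at_inf (wronsk N (fpoly N lam c))) (int j)"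

definition chi :: "nat \<Rightarrow> (nat \<Rightarrow> nat) \<Rightarrow> (nat \<Rightarrow> nat \<Rightarrow> complex) \<Rightarrow> complex poly" where
  "chi N lam c =
     (\<Sum>i\<le>N. Polynomial.smult (if i = 0 then 1 else Fcoef N lam c i i)
                   (\<Prod>j<N - i. [:- of_nat j, 1:]))"

end

(* Write [x]_s = x (x - 1) ... (x - s + 1). Since f_i = u^d_i + lower terms, the derivative
   f_i^(s) has top term [d_i]_s u^(d_i - s). Hence the Wronskian and the minors of the matrix
   defining D start, at u = infinity, with the determinants of the matrices A_k = ([d_r]_s)
   (column k omitted), and F_ii = (-1)^i det A_(N-i) / det A_N. So det A_N * chi(alpha) is the
   Laplace expansion along the last row of the bordered matrix with rows ([d_r]_s)_s and
   ([alpha]_s)_s: a polynomial of degree N in alpha with leading coefficient det A_N, vanishing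
   at each alpha = d_r because two rows coincide. As the d_i are distinct, det A_N is nonzero
   by induction on N, and chi is the product of the alpha - d_i. *)

theory Submission
  imports Defs
begin

section \<open>Top coefficients\<close>

definition has_top_coeff :: "nat \<Rightarrow> 'a::comm_ring_1 \<Rightarrow> 'a poly \<Rightarrow> bool" where
  "has_top_coeff n a p \<longleftrightarrow> (\<forall>k>n. coeff p k = 0) \<and> coeff p n = a"

lemma has_top_coeff_1: "has_top_coeff 0 1 1"
  by (simp add: has_top_coeff_def)

lemma has_top_coeff_linear: "has_top_coeff 1 1 [:a, 1:]"
  by (auto simp: has_top_coeff_def coeff_pCons split: nat.split)

lemma has_top_coeff_mono: "has_top_coeff k a p \<Longrightarrow> k < n \<Longrightarrow> has_top_coeff n 0 p"
  by (simp add: has_top_coeff_def)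

lemma has_top_coeff_0_imp_degree_less:
  assumes "has_top_coeff n 0 p" "p \<noteq> 0"
  shows "degree p < n"
proof -
  have "degree p \<le> n" using assms(1) by (simp add: has_top_coeff_def degree_le)
  moreover have "degree p \<noteq> n" using assms by (auto simp: has_top_coeff_def)
  ultimately show ?thesis by simp
qed

lemma has_top_coeff_smult: "has_top_coeff n a p \<Longrightarrow> has_top_coeff n (c * a) (Polynomial.smult c p)"
  by (simp add: has_top_coeff_def)

lemma has_top_coeff_sum:
  assumes "\<And>x. x \<in> S \<Longrightarrow> has_top_coeff n (a x) (p x)"
  shows "has_top_coeff n (\<Sum>x\<in>S. a x) (\<Sum>x\<in>S. p x)"
  using assms by (simp add: has_top_coeff_def coeff_sum)

lemma has_top_coeff_mult:
  assumes p: "has_top_coeff m a p" and q: "has_top_coeff n b q"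
  shows "has_top_coeff (m + n) (a * b) (p * q)"
proof -
  have vanish: "coeff p i * coeff q (k - i) = 0" if "k \<ge> m + n" "i \<le> k" "i \<noteq> m" for k i
  proof (cases "i < m")
    case True
    then have "k - i > n" using that by arith
    then show ?thesis using q by (simp add: has_top_coeff_def)
  next
    case False
    then show ?thesis using p that by (simp add: has_top_coeff_def)
  qed
  have above: "coeff (p * q) k = 0" if "k > m + n" for k
  proof -
    have "coeff p i * coeff q (k - i) = 0" if "i \<le> k" for i
      using vanish[of k i] q \<open>k > m + n\<close> that by (cases "i = m") (auto simp: has_top_coeff_def)
    then show ?thesis by (simp add: coeff_mult)
  qed
  have "coeff (p * q) (m + n) = coeff p m * coeff q n"
    unfolding coeff_mult by (subst sum.remove[of _ m]) (auto intro!: sum.neutral vanish)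
  then show ?thesis using above p q by (simp add: has_top_coeff_def)
qed

lemma has_top_coeff_prod:
  assumes "finite S" "\<And>x. x \<in> S \<Longrightarrow> has_top_coeff (n x) (a x) (p x)"
  shows "has_top_coeff (\<Sum>x\<in>S. n x) (\<Prod>x\<in>S. a x) (\<Prod>x\<in>S. p x)"
  using assms by (induction S rule: finite_induct) (simp_all add: has_top_coeff_1 has_top_coeff_mult)

lemma has_top_coeff_prod_linear: "has_top_coeff n 1 (\<Prod>r<n. [:x r, 1:])"
  using has_top_coeff_prod[of "{..<n}" "\<lambda>_. 1" "\<lambda>_. 1" "\<lambda>r. [:x r, 1:]"]
  by (simp add: has_top_coeff_linear[unfolded One_nat_def])

lemma smult_sum_right: "Polynomial.smult c (\<Sum>a\<in>A. f a) = (\<Sum>a\<in>A. Polynomial.smult c (f a))"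
  by (induction A rule: infinite_finite_induct) (simp_all add: smult_add_right)

lemma monom_1_sum:
  "finite S \<Longrightarrow> monom (1::'a::comm_semiring_1) (\<Sum>x\<in>S. f x) = (\<Prod>x\<in>S. monom 1 (f x))"
proof (induction S rule: finite_induct)
  case (insert x F)
  have "monom (1::'a) (f x + sum f F) = monom 1 (f x) * monom 1 (sum f F)"
    by (simp add: mult_monom)
  then show ?case using insert by simp
qed (simp add: one_poly_def)

lemma has_top_coeff_det:
  fixes M :: "nat \<Rightarrow> nat \<Rightarrow> 'a::comm_ring_1 poly"
  assumes "\<And>r s. r < n \<Longrightarrow> s < n \<Longrightarrow> has_top_coeff (a r) (L r s) (monom 1 (b s) * M r s)"
  shows "has_top_coeff (\<Sum>r<n. a r) (det (mat n n (\<lambda>(r, s). L r s)))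
           (monom 1 (\<Sum>s<n. b s) * det (mat n n (\<lambda>(r, s). M r s)))"
proof -
  let ?P = "{p. p permutes {0..<n}}"
  have shift: "monom 1 (\<Sum>s<n. b s) * (\<Prod>i=0..<n. M i (p i)) =
      (\<Prod>i=0..<n. monom 1 (b (p i)) * M i (p i))"
    if "p \<in> ?P" for p
  proof -
    have "(\<Sum>s<n. b s) = (\<Sum>i=0..<n. b (p i))"
      using sum.permute[of p "{0..<n}" b] that by (simp add: atLeast0LessThan)
    then show ?thesis by (simp add: monom_1_sum prod.distrib)
  qed
  have expand: "monom 1 (\<Sum>s<n. b s) * det (mat n n (\<lambda>(r, s). M r s)) =
      (\<Sum>p\<in>?P. Polynomial.smult (of_int (sign p)) (\<Prod>i=0..<n. monom 1 (b (p i)) * M i (p i)))"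
  proof -
    have "monom 1 (\<Sum>s<n. b s) * det (mat n n (\<lambda>(r, s). M r s)) =
        (\<Sum>p\<in>?P. monom 1 (\<Sum>s<n. b s) * (of_int (sign p) * (\<Prod>i=0..<n. M i (p i))))"
      unfolding det_def by (simp add: sum_distrib_left)
    also have "\<dots> =
        (\<Sum>p\<in>?P. Polynomial.smult (of_int (sign p)) (\<Prod>i=0..<n. monom 1 (b (p i)) * M i (p i)))"
      by (rule sum.cong[OF refl]) (simp add: of_int_poly mult.left_commute flip: shift)
    finally show ?thesis .
  qed
  have top: "has_top_coeff (\<Sum>i=0..<n. a i) (\<Sum>p\<in>?P. of_int (sign p) * (\<Prod>i=0..<n. L i (p i)))
      (\<Sum>p\<in>?P. Polynomial.smult (of_int (sign p)) (\<Prod>i=0..<n. monom 1 (b (p i)) * M i (p i)))"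
  proof (intro has_top_coeff_sum has_top_coeff_smult has_top_coeff_prod)
    fix p i assume "p \<in> ?P" "i \<in> {0..<n}"
    then show "has_top_coeff (a i) (L i (p i)) (monom 1 (b (p i)) * M i (p i))"
      using assms permutes_in_image by fastforce
  qed simp
  then show ?thesis unfolding expand by (simp add: det_def atLeast0LessThan)
qed

section \<open>Falling factorials\<close>

definition falling_fact :: "'a::comm_ring_1 \<Rightarrow> nat \<Rightarrow> 'a" where
  "falling_fact y s = (\<Prod>j<s. y - of_nat j)"

definition falling_fact_poly :: "nat \<Rightarrow> 'a::comm_ring_1 poly" where
  "falling_fact_poly s = (\<Prod>j<s. [:- of_nat j, 1:])"

lemma poly_falling_fact_poly: "poly (falling_fact_poly s) y = falling_fact y s"
  by (simp add: falling_fact_poly_def falling_fact_def poly_prod)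

lemma has_top_coeff_falling_fact_poly: "has_top_coeff s 1 (falling_fact_poly s)"
  unfolding falling_fact_poly_def by (rule has_top_coeff_prod_linear)

lemma falling_fact_eq_pochhammer: "falling_fact y s = pochhammer (y - of_nat s + 1) s"
proof -
  have "falling_fact y s = (\<Prod>j<s. (-1) * (- y + of_nat j))"
    unfolding falling_fact_def by (rule prod.cong) auto
  also have "\<dots> = (-1) ^ s * pochhammer (- y) s"
    by (simp only: prod.distrib prod_constant card_lessThan pochhammer_prod atLeast0LessThan)
  also have "\<dots> = pochhammer (y - of_nat s + 1) s"
    by (simp add: pochhammer_minus)
  finally show ?thesis .
qed

lemma falling_fact_of_nat_eq_0: "d < s \<Longrightarrow> falling_fact (of_nat d) s = 0"
  unfolding falling_fact_def by (rule prod_zero) auto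

lemma has_top_coeff_higher_pderiv:
  fixes f :: "'a::idom poly"
  assumes "has_top_coeff d 1 f"
  shows "has_top_coeff d (falling_fact (of_nat d) s) (monom 1 s * (pderiv ^^ s) f)"
proof -
  have coeff_eq: "coeff (monom 1 s * (pderiv ^^ s) f) k =
      (if k < s then 0 else pochhammer (of_nat (Suc (k - s))) s * coeff f k)" for k
    by (simp add: coeff_monom_mult coeff_higher_pderiv)
  have "coeff (monom 1 s * (pderiv ^^ s) f) d = falling_fact (of_nat d) s"
  proof (cases "d < s")
    case True
    then show ?thesis by (simp add: coeff_eq falling_fact_of_nat_eq_0)
  next
    case False
    then show ?thesis
      using assms by (simp add: has_top_coeff_def coeff_eq falling_fact_eq_pochhammer of_nat_diff algebra_simps)
  qed
  then show ?thesis using assms by (simp add: has_top_coeff_def coeff_eq)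
qed

definition falling_minor :: "(nat \<Rightarrow> 'a::comm_ring_1) \<Rightarrow> nat \<Rightarrow> nat \<Rightarrow> 'a mat" where
  "falling_minor x n k = mat n n (\<lambda>(r, s). falling_fact (x r) (if s < k then s else Suc s))"

text \<open>The last row is the operator row of D applied to u^alpha, up to the factor u^(alpha - s);
  the other rows are its values at alpha = x r.\<close>

definition falling_border :: "(nat \<Rightarrow> 'a::comm_ring_1) \<Rightarrow> nat \<Rightarrow> 'a poly mat" where
  "falling_border x n =
     mat (Suc n) (Suc n) (\<lambda>(r, s). if r < n then [:falling_fact (x r) s:] else falling_fact_poly s)"

lemma comm_ring_hom_const_poly: "comm_ring_hom (\<lambda>a::'a::comm_ring_1. [:a:])"
  by unfold_locales simp_all

lemma comm_ring_hom_poly_eval: "comm_ring_hom (\<lambda>p::'a::comm_ring_1 poly. poly p y)"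
  by unfold_locales simp_all

lemma det_falling_border:
  fixes x :: "nat \<Rightarrow> 'a::comm_ring_1"
  shows "det (falling_border x n) =
     (\<Sum>i\<le>n. Polynomial.smult ((-1) ^ i * det (falling_minor x n (n - i))) (falling_fact_poly (n - i)))"
proof -
  have cofactor: "cofactor (falling_border x n) n k = [:(-1) ^ (n + k) * det (falling_minor x n k):]"
    if "k \<le> n" for k
  proof -
    have "mat_delete (falling_border x n) n k = map_mat (\<lambda>a. [:a:]) (falling_minor x n k)"
      using that by (intro eq_matI) (auto simp: mat_delete_def falling_border_def falling_minor_def)
    then show ?thesis
      by (simp add: cofactor_def comm_ring_hom.hom_det[OF comm_ring_hom_const_poly])
        (cases "even (n + k)"; simp)
  qed
  have last_row: "falling_border x n $$ (n, k) = falling_fact_poly k" if "k \<le> n" for k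
    using that by (simp add: falling_border_def)
  have "det (falling_border x n) = (\<Sum>k<Suc n. falling_border x n $$ (n, k) * cofactor (falling_border x n) n k)"
    by (rule laplace_expansion_row) (auto simp: falling_border_def)
  also have "\<dots> =
      (\<Sum>k\<le>n. Polynomial.smult ((-1) ^ (n + k) * det (falling_minor x n k)) (falling_fact_poly k))"
    by (rule sum.cong) (auto simp: cofactor last_row)
  also have "\<dots> =
      (\<Sum>i\<le>n. Polynomial.smult ((-1) ^ i * det (falling_minor x n (n - i))) (falling_fact_poly (n - i)))"
  proof (rule sum.reindex_bij_witness[of _ "\<lambda>i. n - i" "\<lambda>k. n - k"])
    fix k assume "k \<in> {..n}"
    then have "(-1::'a) ^ (n + k) = (-1) ^ ((n - k) + 2 * k)"
      by (intro arg_cong[where f = "(^) (-1)"]) auto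
    also have "\<dots> = (-1) ^ (n - k)"
      by (simp add: power_add power_mult)
    finally show "Polynomial.smult ((-1) ^ (n - k) * det (falling_minor x n (n - (n - k))))
        (falling_fact_poly (n - (n - k))) =
        Polynomial.smult ((-1) ^ (n + k) * det (falling_minor x n k)) (falling_fact_poly k)"
      using \<open>k \<in> {..n}\<close> by simp
  qed auto
  finally show ?thesis .
qed

lemma has_top_coeff_det_falling_border:
  "has_top_coeff n (det (falling_minor x n n)) (det (falling_border x n))"
proof -
  have "has_top_coeff n (\<Sum>i\<le>n. if i = 0 then det (falling_minor x n n) else 0)
      (\<Sum>i\<le>n. Polynomial.smult ((-1) ^ i * det (falling_minor x n (n - i))) (falling_fact_poly (n - i)))"
  proof (rule has_top_coeff_sum)
    fix i assume "i \<in> {..n}"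
    have top: "has_top_coeff (n - i) ((-1) ^ i * det (falling_minor x n (n - i)) * 1)
        (Polynomial.smult ((-1) ^ i * det (falling_minor x n (n - i))) (falling_fact_poly (n - i)))"
      by (rule has_top_coeff_smult[OF has_top_coeff_falling_fact_poly])
    show "has_top_coeff n (if i = 0 then det (falling_minor x n n) else 0)
        (Polynomial.smult ((-1) ^ i * det (falling_minor x n (n - i))) (falling_fact_poly (n - i)))"
      using top has_top_coeff_mono[OF top, of n] \<open>i \<in> {..n}\<close> by auto
  qed
  then show ?thesis by (simp add: det_falling_border)
qed

lemma poly_det_falling_border_root: "r < n \<Longrightarrow> poly (det (falling_border x n)) (x r) = 0"
proof -
  assume "r < n"
  let ?A = "map_mat (\<lambda>p. poly p (x r)) (falling_border x n)"
  have "poly (det (falling_border x n)) (x r) = det ?A"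
    by (simp add: comm_ring_hom.hom_det[OF comm_ring_hom_poly_eval])
  also have "det ?A = 0"
    by (rule det_identical_rows[of _ "Suc n" r n])
      (use \<open>r < n\<close> in \<open>auto simp: falling_border_def poly_falling_fact_poly intro!: eq_vecI\<close>)
  finally show ?thesis .
qed

lemma det_falling_border_eq_prod:
  fixes x :: "nat \<Rightarrow> 'a::idom"
  assumes inj: "inj_on x {..<n}"
  shows "det (falling_border x n) = Polynomial.smult (det (falling_minor x n n)) (\<Prod>r<n. [:- x r, 1:])"
proof (rule ccontr)
  define P where
    "P = det (falling_border x n) - Polynomial.smult (det (falling_minor x n n)) (\<Prod>r<n. [:- x r, 1:])"
  assume "\<not> ?thesis"
  then have "P \<noteq> 0" by (simp add: P_def)
  have "has_top_coeff n 0 P"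
    using has_top_coeff_det_falling_border[of n x] has_top_coeff_prod_linear[of n "\<lambda>r. - x r"]
    by (simp add: P_def has_top_coeff_def)
  then have "degree P < n" using \<open>P \<noteq> 0\<close> by (rule has_top_coeff_0_imp_degree_less)
  have "x ` {..<n} \<subseteq> {y. poly P y = 0}"
    by (auto simp: P_def poly_det_falling_border_root poly_prod)
  then have "card (x ` {..<n}) \<le> card {y. poly P y = 0}"
    by (rule card_mono[OF poly_roots_finite[OF \<open>P \<noteq> 0\<close>]])
  also have "\<dots> \<le> degree P" by (rule card_poly_roots_bound[OF \<open>P \<noteq> 0\<close>])
  finally show False using \<open>degree P < n\<close> card_image[OF inj] by simp
qed

lemma det_falling_minor_Suc:
  "det (falling_minor x (Suc n) (Suc n)) = poly (det (falling_border x n)) (x n)"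
proof -
  have "map_mat (\<lambda>p. poly p (x n)) (falling_border x n) = falling_minor x (Suc n) (Suc n)"
    by (rule eq_matI) (auto simp: falling_border_def falling_minor_def poly_falling_fact_poly elim: less_SucE)
  then show ?thesis by (metis comm_ring_hom.hom_det[OF comm_ring_hom_poly_eval])
qed

lemma det_falling_minor_nonzero:
  fixes x :: "nat \<Rightarrow> 'a::idom"
  shows "inj_on x {..<n} \<Longrightarrow> det (falling_minor x n n) \<noteq> 0"
proof (induction n)
  case 0
  then show ?case by (simp add: falling_minor_def det_def)
next
  case (Suc n)
  have inj: "inj_on x {..<n}" using Suc.prems by (rule inj_on_subset) auto
  have "det (falling_minor x (Suc n) (Suc n)) = det (falling_minor x n n) * (\<Prod>r<n. x n - x r)"
    by (simp add: det_falling_minor_Suc det_falling_border_eq_prod[OF inj] poly_prod)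
  moreover have "x n \<noteq> x r" if "r < n" for r
    using inj_onD[OF Suc.prems, of n r] that by auto
  ultimately show ?case using Suc.IH[OF inj] by simp
qed

lemma falling_minor_expansion:
  fixes x :: "nat \<Rightarrow> 'a::field"
  assumes "inj_on x {..<n}"
  shows "(\<Sum>i\<le>n. Polynomial.smult ((-1) ^ i * det (falling_minor x n (n - i)) / det (falling_minor x n n))
            (falling_fact_poly (n - i))) = (\<Prod>r<n. [:- x r, 1:])"
proof -
  let ?V = "det (falling_minor x n n)"
  have "Polynomial.smult ?V (\<Sum>i\<le>n. Polynomial.smult ((-1) ^ i * det (falling_minor x n (n - i)) / ?V)
      (falling_fact_poly (n - i))) = det (falling_border x n)"
    using det_falling_minor_nonzero[OF assms]
    by (simp add: det_falling_border smult_sum_right)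
  also have "\<dots> = Polynomial.smult ?V (\<Prod>r<n. [:- x r, 1:])"
    by (rule det_falling_border_eq_prod[OF assms])
  finally show ?thesis using det_falling_minor_nonzero[OF assms] by (rule smult_cancel[rotated])
qed

section \<open>Expansion at infinity\<close>

lemma fls_nth_poly_at_inf: "fls_nth (poly_at_inf p) n = (if n \<le> 0 then coeff p (nat (- n)) else 0)"
proof -
  have "fls_nth (poly_at_inf p) n = (\<Sum>k\<le>degree p. coeff p k * (if n = - int k then 1 else 0))"
    by (simp add: poly_at_inf_def fls_nth_sum fls_X_inv_power_nth)
  also have "\<dots> = (\<Sum>k\<le>degree p. if k = nat (- n) \<and> n \<le> 0 then coeff p k else 0)"
    by (rule sum.cong) auto
  also have "\<dots> = (if n \<le> 0 then coeff p (nat (- n)) else 0)"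
    by (auto simp: coeff_eq_0)
  finally show ?thesis .
qed

lemma poly_at_inf_has_top_coeff:
  assumes "has_top_coeff A a (monom 1 m * p)"
  shows "\<forall>n < int m - int A. fls_nth (poly_at_inf p) n = 0"
    and "fls_nth (poly_at_inf p) (int m - int A) = a"
proof -
  have shift: "coeff p k = coeff (monom 1 m * p) (k + m)" for k
    by (simp add: coeff_monom_mult)
  have above: "\<forall>k>A. coeff (monom 1 m * p) k = 0" and top: "coeff (monom 1 m * p) A = a"
    using assms by (auto simp: has_top_coeff_def)
  show "\<forall>n < int m - int A. fls_nth (poly_at_inf p) n = 0"
  proof (intro allI impI)
    fix n :: int assume "n < int m - int A"
    then have "n > 0 \<or> nat (- n) + m > A" by auto
    then show "fls_nth (poly_at_inf p) n = 0"
      using above by (auto simp: fls_nth_poly_at_inf shift)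
  qed
  show "fls_nth (poly_at_inf p) (int m - int A) = a"
  proof (cases "m \<le> A")
    case True
    then have "nat (- (int m - int A)) + m = A" by auto
    then show ?thesis using True top by (simp add: fls_nth_poly_at_inf shift)
  next
    case False
    then have "a = 0" using top by (simp add: coeff_monom_mult)
    then show ?thesis using False by (simp add: fls_nth_poly_at_inf)
  qed
qed

lemma fls_nth_divide_by_subdegree:
  fixes g h :: "'a::field fls"
  assumes g_below: "\<forall>n<e. fls_nth g n = 0" and g_at: "fls_nth g e \<noteq> 0"
    and h_below: "\<forall>n<e + i. fls_nth h n = 0"
  shows "fls_nth (h / g) i = fls_nth h (e + i) / fls_nth g e"
proof (cases "h = 0")
  case False
  have "g \<noteq> 0" using g_at by auto
  have sg: "fls_subdegree g = e" using g_below g_at by (intro fls_subdegree_eqI) auto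
  have sh: "e + i \<le> fls_subdegree h" using h_below False by (intro fls_subdegree_geI) auto
  define Q where "Q = h / g"
  have "Q * g = h" using \<open>g \<noteq> 0\<close> by (simp add: Q_def)
  then have convolution: "fls_nth h (e + i) = (\<Sum>j = fls_subdegree Q..i. fls_nth Q j * fls_nth g (e + i - j))"
    using fls_times_nth(2)[of Q g "e + i"] by (simp add: sg)
  have sQ: "fls_subdegree Q = fls_subdegree h - e"
    using False \<open>g \<noteq> 0\<close> sg by (simp add: Q_def fls_divide_subdegree)
  show ?thesis
  proof (cases "fls_subdegree Q = i")
    case True
    then have "fls_nth h (e + i) = fls_nth Q i * fls_nth g e" using convolution by simp
    then show ?thesis using g_at by (simp add: Q_def)
  next
    case False
    then have "fls_subdegree Q > i" using sQ sh by auto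
    then have "fls_nth Q i = 0" "fls_nth h (e + i) = 0"
      using convolution by (auto simp: fls_eq0_below_subdegree)
    then show ?thesis by (simp add: Q_def)
  qed
qed simp

section \<open>The Wronskian and its minors\<close>

lemma has_top_coeff_fpoly: "has_top_coeff (dseq N lam i) 1 (fpoly N lam c i)"
proof -
  let ?d = "dseq N lam i"
  let ?J = "{j. 1 \<le> j \<and> j \<le> ?d \<and> ?d - j \<notin> degset N lam}"
  have lower: "(\<Sum>j\<in>?J. coeff (monom (c i j) (?d - j)) k) = 0" if "k \<ge> ?d" for k
    by (rule sum.neutral) (use that in \<open>auto simp: coeff_monom\<close>)
  show ?thesis
    using lower by (auto simp: has_top_coeff_def fpoly_def coeff_sum coeff_monom)
qed

lemma wronsk_eq_wminor: "wronsk N f = wminor N f N"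
  unfolding wronsk_def wminor_def by (rule arg_cong[where f = det], rule eq_matI) auto

lemma sum_skip_index: "(\<Sum>s<n. if s < k then s else Suc s) = (\<Sum>s<n. s) + (n - k)"
  by (induction n) auto

lemma has_top_coeff_wminor:
  assumes "\<And>r. r < N \<Longrightarrow> has_top_coeff (d r) 1 (f (Suc r))"
  shows "has_top_coeff (\<Sum>r<N. d r) (det (falling_minor (\<lambda>r. of_nat (d r)) N k))
           (monom 1 ((\<Sum>s<N. s) + (N - k)) * wminor N f k)"
proof -
  have "has_top_coeff (\<Sum>r<N. d r)
      (det (mat N N (\<lambda>(r, s). falling_fact (of_nat (d r)) (if s < k then s else Suc s))))
      (monom 1 (\<Sum>s<N. if s < k then s else Suc s) *
        det (mat N N (\<lambda>(r, s). (pderiv ^^ (if s < k then s else Suc s)) (f (Suc r)))))"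
    by (rule has_top_coeff_det) (simp add: assms has_top_coeff_higher_pderiv)
  then show ?thesis by (simp add: wminor_def falling_minor_def sum_skip_index)
qed

lemma is_partition_antimono:
  assumes "is_partition N lam" "1 \<le> i" "i \<le> j" "j \<le> N"
  shows "lam j \<le> lam i"
  using assms(3,4)
proof (induction j rule: dec_induct)
  case (step j)
  have "lam (Suc j) \<le> lam j" using assms(1,2) step by (simp add: is_partition_def)
  then show ?case using step by simp
qed simp

lemma inj_on_dseq:
  assumes "is_partition N lam"
  shows "inj_on (\<lambda>r. of_nat (dseq N lam (Suc r)) :: 'a::semiring_char_0) {..<N}"
proof (rule inj_onI)
  have decreasing: "dseq N lam (Suc b) < dseq N lam (Suc a)" if "a < b" "b < N" for a b
    using is_partition_antimono[OF assms, of "Suc a" "Suc b"] that by (simp add: dseq_def)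
  fix r r' assume "r \<in> {..<N}" "r' \<in> {..<N}"
    and "(of_nat (dseq N lam (Suc r)) :: 'a) = of_nat (dseq N lam (Suc r'))"
  then show "r = r'"
    using decreasing[of r r'] decreasing[of r' r]
    by (metis lessThan_iff linorder_neqE_nat of_nat_eq_iff order_less_irrefl)
qed

lemma Fcoef_diag:
  fixes N :: nat and lam :: "nat \<Rightarrow> nat"
  defines "x \<equiv> \<lambda>r. of_nat (dseq N lam (Suc r)) :: complex"
  assumes "is_partition N lam" "i \<le> N"
  shows "Fcoef N lam c i i = (-1) ^ i * det (falling_minor x N (N - i)) / det (falling_minor x N N)"
proof -
  let ?A = "\<Sum>r<N. dseq N lam (Suc r)"
  define e where "e = int (\<Sum>s<N. s) - int ?A"
  define W where "W = poly_at_inf (wronsk N (fpoly N lam c))"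
  define M where "M = poly_at_inf (wminor N (fpoly N lam c) (N - i))"
  have top: "has_top_coeff ?A (det (falling_minor x N k))
      (monom 1 ((\<Sum>s<N. s) + (N - k)) * wminor N (fpoly N lam c) k)" for k
    unfolding x_def by (rule has_top_coeff_wminor) (rule has_top_coeff_fpoly)
  have W_below: "\<forall>n<e. fls_nth W n = 0" and W_at: "fls_nth W e = det (falling_minor x N N)"
    using poly_at_inf_has_top_coeff[OF top[of N]] by (simp_all add: W_def e_def wronsk_eq_wminor)
  have M_below: "\<forall>n<e + int i. fls_nth M n = 0"
    and M_at: "fls_nth M (e + int i) = det (falling_minor x N (N - i))"
    using poly_at_inf_has_top_coeff[OF top[of "N - i"]] \<open>i \<le> N\<close>
    by (simp_all add: M_def e_def algebra_simps)
  have sign: "fls_nth ((-1) ^ i * M) n = (-1) ^ i * fls_nth M n" for n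
  proof -
    have "((-1) ^ i :: complex fls) = of_int ((-1) ^ i)" by simp
    then show ?thesis by (simp only: fls_mult_of_int_nth) simp
  qed
  have "det (falling_minor x N N) \<noteq> 0"
    unfolding x_def by (rule det_falling_minor_nonzero[OF inj_on_dseq[OF assms(2)]])
  then have "Fcoef N lam c i i = fls_nth ((-1) ^ i * M) (e + int i) / fls_nth W e"
    unfolding Fcoef_def W_def[symmetric] M_def[symmetric]
    by (intro fls_nth_divide_by_subdegree) (use W_below W_at M_below sign in auto)
  then show ?thesis by (simp add: sign M_at W_at)
qed

theorem lemma3p3:
  fixes N :: nat and lam :: "nat \<Rightarrow> nat" and c :: "nat \<Rightarrow> nat \<Rightarrow> complex"
  assumes "is_partition N lam"
  shows "chi N lam c = (\<Prod>i\<in>{1..N}. [:- of_nat (dseq N lam i), 1:])"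
proof -
  define x where "x = (\<lambda>r. of_nat (dseq N lam (Suc r)) :: complex)"
  have inj: "inj_on x {..<N}"
    unfolding x_def by (rule inj_on_dseq[OF assms])
  have "chi N lam c = (\<Sum>i\<le>N.
      Polynomial.smult ((-1) ^ i * det (falling_minor x N (N - i)) / det (falling_minor x N N))
        (falling_fact_poly (N - i)))"
    unfolding chi_def falling_fact_poly_def
    using det_falling_minor_nonzero[OF inj] by (intro sum.cong) (simp_all add: Fcoef_diag[OF assms] x_def)
  also have "\<dots> = (\<Prod>r<N. [:- x r, 1:])"
    by (rule falling_minor_expansion[OF inj])
  also have "\<dots> = (\<Prod>i\<in>{1..N}. [:- of_nat (dseq N lam i), 1:])"
    by (simp add: x_def prod.atLeast1_atMost_eq)
  finally show ?thesis .
qed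

end
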